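(* Let $A\colon\mathbb{T}^d\to\mathbb{T}^d$ be a linear Anosov automorphism with splitting $E^s_A\oplus E^u_A$, $d_s=\dim E^s_A$, $d_u=\dim E^u_A$, with an adapted norm in which $E^s_A\perp E^u_A$, $\|A|_{E^s_A}\|\le\lambda$, $m(A|_{E^u_A})\ge\gamma$, $0<\lambda<1<\gamma$. Let $f\colon\mathbb{T}^d\to\mathbb{T}^d$ be a diffeomorphism homotopic to $A$ admitting a dominated splitting $T\mathbb{T}^d=E\oplus F$ with $\dim E=d_s$, $\dim F=d_u$, $\|Df|_E\|\le\hat\gamma<\gamma$ and $m(Df|_F)\ge\hat\lambda>\lambda$. Suppose $E$ and $F$ are integrable, and let $\mathcal E$ and $\mathcal F$ be the lifts to $\mathbb{R}^d$ of the corresponding tangent foliations. Then there is $R>0$ such that for every $x\in\mathbb{R}^d$, $$\mathcal E(x)\subset B_R(\widetilde W^s_A(x))\qquad\text{and}\qquad\mathcal F(x)\subset B_R(\widetilde W^u_A(x)),$$ where $\widetilde W^s_A(x)=x+E^s_A$, $\widetilde W^u_A(x)=x+E^u_A$ and $B_R(S)$ denotes the set of points of $\mathbb{R}^d$ at distance at most $R$ from $S$.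
   Context: For a linear map $T$, $m(T):=\|T^{-1}\|^{-1}$. A dominated splitting $TM=E\oplus F$ is a continuous $Df$-invariant splitting with constants $C>0$, $0<\nu<1$ such that $\|Df^n|_{E(x)}\|\cdot\|Df^{-n}|_{F(f^nx)}\|\le C\nu^n$ for all $x$, $n>0$. Norms and distances on $\mathbb{R}^d$ and $T\mathbb{T}^d$ are those induced by the adapted norm for $A$. *)

theory Defs
  imports "HOL-Analysis.Analysis"
begin

section \<open>The torus as R^d modulo the integer lattice\<close>

definition int_lattice :: "(real^'n) set" where
  "int_lattice = {z. \<forall>i. z $ i \<in> \<int>}"

definition torus_automorphism :: "real^'n^'n \<Rightarrow> bool" where
  "torus_automorphism A \<longleftrightarrow> (\<forall>i j. A $ i $ j \<in> \<int>) \<and> \<bar>det A\<bar> = 1"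

section \<open>The adapted norm, given by a positive definite symmetric matrix Q\<close>

definition ipQ :: "real^'n^'n \<Rightarrow> real^'n \<Rightarrow> real^'n \<Rightarrow> real" where
  "ipQ Q x y = x \<bullet> (Q *v y)"

definition qnorm :: "real^'n^'n \<Rightarrow> real^'n \<Rightarrow> real" where
  "qnorm Q x = sqrt (ipQ Q x x)"

definition inner_product_matrix :: "real^'n^'n \<Rightarrow> bool" where
  "inner_product_matrix Q \<longleftrightarrow> transpose Q = Q \<and> (\<forall>x. x \<noteq> 0 \<longrightarrow> ipQ Q x x > 0)"

definition restr_norm :: "real^'n^'n \<Rightarrow> real^'n^'n \<Rightarrow> (real^'n) set \<Rightarrow> real" where
  "restr_norm Q L S = (SUP v\<in>S - {0}. qnorm Q (L *v v) / qnorm Q v)"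

text \<open>Conorm \<open>m(L|_S) = \<parallel>(L|_S)^{-1}\<parallel>^{-1}\<close>, written out as an infimum.\<close>
definition restr_conorm :: "real^'n^'n \<Rightarrow> real^'n^'n \<Rightarrow> (real^'n) set \<Rightarrow> real" where
  "restr_conorm Q L S = (INF v\<in>S - {0}. qnorm Q (L *v v) / qnorm Q v)"

definition qnbhd :: "real^'n^'n \<Rightarrow> real \<Rightarrow> (real^'n) set \<Rightarrow> (real^'n) set" where
  "qnbhd Q R S = {y. \<exists>s\<in>S. qnorm Q (y - s) \<le> R}"

section \<open>Diffeomorphisms of the torus homotopic to A, via lifts\<close>

text \<open>F is the lift to R^d of a C^1 diffeomorphism f of the torus homotopic to A:
  F is a bijection with continuous, everywhere invertible derivative DF and
  F(x + z) = F x + A z for integer vectors z.\<close>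
definition torus_diffeo_lift :: "real^'n^'n \<Rightarrow> (real^'n \<Rightarrow> real^'n) \<Rightarrow> (real^'n \<Rightarrow> real^'n^'n) \<Rightarrow> bool" where
  "torus_diffeo_lift A F DF \<longleftrightarrow>
     bij F \<and>
     (\<forall>x. (F has_derivative (\<lambda>h. DF x *v h)) (at x)) \<and>
     continuous_on UNIV DF \<and>
     (\<forall>x. invertible (DF x)) \<and>
     (\<forall>x z. z \<in> int_lattice \<longrightarrow> F (x + z) = F x + A *v z)"

fun Dn :: "(real^'n \<Rightarrow> real^'n) \<Rightarrow> (real^'n \<Rightarrow> real^'n^'n) \<Rightarrow> nat \<Rightarrow> real^'n \<Rightarrow> real^'n^'n" where
  "Dn F DF 0 x = mat 1"
| "Dn F DF (Suc n) x = DF ((F ^^ n) x) ** Dn F DF n x"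

definition periodic_field :: "(real^'n \<Rightarrow> (real^'n) set) \<Rightarrow> bool" where
  "periodic_field E \<longleftrightarrow> (\<forall>x z. z \<in> int_lattice \<longrightarrow> E (x + z) = E x)"

text \<open>Continuity of a field of subspaces (in the Grassmannian / gap topology).\<close>
definition continuous_subspace_field :: "real^'n^'n \<Rightarrow> (real^'n \<Rightarrow> (real^'n) set) \<Rightarrow> bool" where
  "continuous_subspace_field Q E \<longleftrightarrow>
     (\<forall>x \<epsilon>. \<epsilon> > 0 \<longrightarrow> (\<exists>\<delta>>0. \<forall>y. qnorm Q (y - x) < \<delta> \<longrightarrow>
        (\<forall>v\<in>E x. \<exists>w\<in>E y. qnorm Q (v - w) \<le> \<epsilon> * qnorm Q v) \<and>
        (\<forall>w\<in>E y. \<exists>v\<in>E x. qnorm Q (w - v) \<le> \<epsilon> * qnorm Q w)))"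

definition dominated_splitting ::
  "real^'n^'n \<Rightarrow> (real^'n \<Rightarrow> real^'n) \<Rightarrow> (real^'n \<Rightarrow> real^'n^'n) \<Rightarrow>
   (real^'n \<Rightarrow> (real^'n) set) \<Rightarrow> (real^'n \<Rightarrow> (real^'n) set) \<Rightarrow> bool" where
  "dominated_splitting Q F DF E G \<longleftrightarrow>
     (\<forall>x. subspace (E x) \<and> subspace (G x) \<and> E x \<inter> G x = {0} \<and>
          {a + b |a b. a \<in> E x \<and> b \<in> G x} = UNIV) \<and>
     continuous_subspace_field Q E \<and> continuous_subspace_field Q G \<and>
     (\<forall>x. (\<lambda>v. DF x *v v) ` E x = E (F x) \<and> (\<lambda>v. DF x *v v) ` G x = G (F x)) \<and>
     (\<exists>C>0. \<exists>\<nu>. 0 < \<nu> \<and> \<nu> < 1 \<and>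
        (\<forall>x n. n > 0 \<longrightarrow>
           restr_norm Q (Dn F DF n x) (E x) *
           restr_norm Q (matrix_inv (Dn F DF n x)) (G ((F ^^ n) x)) \<le> C * \<nu> ^ n))"

text \<open>Foliation charts: phi is defined on the product of the unit ball of the model
  leaf space M with the unit ball of the model transversal space N.\<close>
definition chart_dom :: "(real^'n) set \<Rightarrow> (real^'n) set \<Rightarrow> ((real^'n) \<times> (real^'n)) set" where
  "chart_dom M N = (M \<inter> ball 0 1) \<times> (N \<inter> ball 0 1)"

definition plaque_through ::
  "(real^'n) set \<Rightarrow> (real^'n) set \<Rightarrow> ((real^'n) \<times> (real^'n) \<Rightarrow> real^'n) \<Rightarrow> real^'n \<Rightarrow> (real^'n) set" where
  "plaque_through M N \<phi> y =
     {z. \<exists>a a' b. (a, b) \<in> chart_dom M N \<and> (a', b) \<in> chart_dom M N \<and> \<phi> (a, b) = y \<and> \<phi> (a', b) = z}"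

definition foliation_chart ::
  "(real^'n) set \<Rightarrow> (real^'n) set \<Rightarrow> (real^'n \<Rightarrow> (real^'n) set) \<Rightarrow> ((real^'n) \<times> (real^'n) \<Rightarrow> real^'n) \<Rightarrow> bool" where
  "foliation_chart M N E \<phi> \<longleftrightarrow>
     open (\<phi> ` chart_dom M N) \<and>
     (\<exists>\<psi>. homeomorphism (chart_dom M N) (\<phi> ` chart_dom M N) \<phi> \<psi>) \<and>
     (\<forall>b \<in> N \<inter> ball 0 1. \<exists>D :: real^'n \<Rightarrow> real^'n^'n.
        continuous_on (M \<inter> ball 0 1) D \<and>
        (\<forall>a \<in> M \<inter> ball 0 1.
           ((\<lambda>a'. \<phi> (a', b)) has_derivative (\<lambda>h. D a *v h)) (at a within (M \<inter> ball 0 1)) \<and>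
           (\<lambda>h. D a *v h) ` M = E (\<phi> (a, b))))"

definition foliation_atlas ::
  "(real^'n) set \<Rightarrow> (real^'n) set \<Rightarrow> (real^'n \<Rightarrow> (real^'n) set) \<Rightarrow> ((real^'n) \<times> (real^'n) \<Rightarrow> real^'n) set \<Rightarrow> bool" where
  "foliation_atlas M N E \<A> \<longleftrightarrow>
     (\<forall>\<phi>\<in>\<A>. foliation_chart M N E \<phi>) \<and>
     (\<forall>p. \<exists>\<phi>\<in>\<A>. p \<in> \<phi> ` chart_dom M N) \<and>
     (\<forall>\<phi>1\<in>\<A>. \<forall>\<phi>2\<in>\<A>. \<forall>a b. (a, b) \<in> chart_dom M N \<longrightarrow> \<phi>1 (a, b) \<in> \<phi>2 ` chart_dom M N \<longrightarrow>
        (\<exists>\<epsilon>>0. \<forall>a'\<in>M \<inter> ball 0 1. norm (a' - a) < \<epsilon> \<longrightarrow>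
            \<phi>1 (a', b) \<in> plaque_through M N \<phi>2 (\<phi>1 (a, b))))"

definition leaf_of ::
  "(real^'n) set \<Rightarrow> (real^'n) set \<Rightarrow> ((real^'n) \<times> (real^'n) \<Rightarrow> real^'n) set \<Rightarrow> real^'n \<Rightarrow> (real^'n) set" where
  "leaf_of M N \<A> x =
     {y. (\<lambda>u v. \<exists>\<phi>\<in>\<A>. v \<in> plaque_through M N \<phi> u \<or> u \<in> plaque_through M N \<phi> v)\<^sup>*\<^sup>* x y}"

text \<open>W x is the leaf through x of a (C^0) foliation with C^1 leaves tangent to E,
  whose leaves are modelled on M (dimension of the leaves) with transversal model N.\<close>
definition tangent_foliation ::
  "(real^'n) set \<Rightarrow> (real^'n) set \<Rightarrow> (real^'n \<Rightarrow> (real^'n) set) \<Rightarrow> (real^'n \<Rightarrow> (real^'n) set) \<Rightarrow> bool" where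
  "tangent_foliation M N E W \<longleftrightarrow>
     (\<exists>\<A>. foliation_atlas M N E \<A> \<and> (\<forall>x. W x = leaf_of M N \<A> x))"

text \<open>W is the lift of a foliation of the torus.\<close>
definition periodic_foliation :: "(real^'n \<Rightarrow> (real^'n) set) \<Rightarrow> bool" where
  "periodic_foliation W \<longleftrightarrow> (\<forall>x z. z \<in> int_lattice \<longrightarrow> W (x + z) = (\<lambda>y. y + z) ` W x)"

end

theory Submission
  imports Defs
begin

text \<open>Write the lift as \<open>F = A + \<phi>\<close> with \<open>\<phi>\<close> continuous and periodic, hence bounded, so that
  \<open>F p - F q = A (p - q) + e\<close> with \<open>e\<close> uniformly bounded, say by \<open>C\<close>. If \<open>y\<close> lies on the leaf
  through \<open>x\<close> tangent to \<open>E\<close>, the bound on \<open>Df\<close> along \<open>E\<close> gives \<open>|F^k y - F^k x| = O(gamh^k)\<close>.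
  On the other hand \<open>A\<close> stretches the \<open>E^u_A\<close>-component \<open>w_k\<close> of \<open>F^k y - F^k x\<close> by \<open>gam\<close>, so
  \<open>w_(k+1) \<ge> gam w_k - C\<close>. If \<open>w_0\<close> exceeded \<open>C / (gam - 1)\<close>, then \<open>w_k\<close> would grow like
  \<open>gam^k\<close>, contradicting \<open>gamh < gam\<close>; hence \<open>y\<close> stays within \<open>C / (gam - 1)\<close> of \<open>x + E^s_A\<close>.
  Leaves tangent to \<open>G\<close> are handled in the same way with \<open>F\<^sup>-\<^sup>1\<close>, which expands \<open>G\<close> at most by
  \<open>1 / lamh < 1 / lam\<close>.\<close>

section \<open>The adapted norm\<close>

lemma ipQ_add_left: "ipQ Q (x + y) z = ipQ Q x z + ipQ Q y z"
  by (simp add: ipQ_def inner_add_left)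

lemma ipQ_add_right: "ipQ Q z (x + y) = ipQ Q z x + ipQ Q z y"
  by (simp add: ipQ_def matrix_vector_right_distrib inner_add_right)

lemma ipQ_scale_left: "ipQ Q (c *\<^sub>R x) z = c * ipQ Q x z"
  by (simp add: ipQ_def)

lemma ipQ_scale_right: "ipQ Q z (c *\<^sub>R x) = c * ipQ Q z x"
  by (simp add: ipQ_def matrix_vector_mult_scaleR)

lemma ipQ_zero [simp]: "ipQ Q 0 x = 0" "ipQ Q x 0 = 0"
  by (simp_all add: ipQ_def)

lemma qnorm_zero [simp]: "qnorm Q 0 = 0"
  by (simp add: qnorm_def)

lemma continuous_on_qnorm: "continuous_on S (qnorm Q)"
  unfolding qnorm_def ipQ_def by (intro continuous_intros)

lemma qnorm_le_norm: "\<exists>C>0. \<forall>x. qnorm Q x \<le> C * norm x"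
proof -
  obtain B where B: "B > 0" "\<And>x. norm (Q *v x) \<le> B * norm x"
    using bounded_linear.pos_bounded[OF matrix_vector_mul_bounded_linear[of Q]]
    by (auto simp: mult.commute)
  have "qnorm Q x \<le> sqrt B * norm x" for x
  proof -
    have "ipQ Q x x \<le> norm x * norm (Q *v x)"
      unfolding ipQ_def by (meson Cauchy_Schwarz_ineq2 abs_le_D1)
    also have "\<dots> \<le> norm x * (B * norm x)" using B(2) by (simp add: mult_left_mono)
    also have "\<dots> = (sqrt B * norm x)\<^sup>2"
      using B(1) by (simp add: power_mult_distrib power2_eq_square)
    finally show ?thesis unfolding qnorm_def using B(1) by (intro real_le_lsqrt) auto
  qed
  with B show ?thesis by (intro exI[of _ "sqrt B"]) auto
qed

locale adapted_norm =
  fixes Q :: "real^'n^'n"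
  assumes inner_product_matrix_Q: "inner_product_matrix Q"
begin

lemma ipQ_sym: "ipQ Q x y = ipQ Q y x"
proof -
  have "ipQ Q x y = x \<bullet> (transpose Q *v y)"
    using inner_product_matrix_Q by (simp add: ipQ_def inner_product_matrix_def)
  also have "\<dots> = (y v* Q) \<bullet> x" by (simp add: inner_commute)
  also have "\<dots> = ipQ Q y x" by (simp add: dot_lmul_matrix ipQ_def)
  finally show ?thesis .
qed

lemma ipQ_pos: "x \<noteq> 0 \<Longrightarrow> ipQ Q x x > 0"
  using inner_product_matrix_Q by (simp add: inner_product_matrix_def)

lemma ipQ_nonneg: "ipQ Q x x \<ge> 0"
  using ipQ_pos[of x] by (cases "x = 0") auto

lemma qnorm_power2: "(qnorm Q x)\<^sup>2 = ipQ Q x x"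
  using ipQ_nonneg by (simp add: qnorm_def)

lemma qnorm_nonneg: "qnorm Q x \<ge> 0"
  using ipQ_nonneg by (simp add: qnorm_def)

lemma qnorm_pos: "x \<noteq> 0 \<Longrightarrow> qnorm Q x > 0"
  using ipQ_pos by (simp add: qnorm_def)

lemma qnorm_scaleR: "qnorm Q (c *\<^sub>R x) = \<bar>c\<bar> * qnorm Q x"
proof -
  have "ipQ Q (c *\<^sub>R x) (c *\<^sub>R x) = c\<^sup>2 * ipQ Q x x"
    by (simp add: ipQ_scale_left ipQ_scale_right power2_eq_square)
  then show ?thesis by (simp add: qnorm_def real_sqrt_mult)
qed

lemma qnorm_minus: "qnorm Q (- x) = qnorm Q x"
  using qnorm_scaleR[of "-1" x] by simp

lemma qnorm_minus_commute: "qnorm Q (x - y) = qnorm Q (y - x)"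
  using qnorm_minus[of "x - y"] by simp

lemma ipQ_Cauchy_Schwarz: "\<bar>ipQ Q x y\<bar> \<le> qnorm Q x * qnorm Q y"
proof (cases "x = 0")
  case False
  let ?a = "ipQ Q x x" and ?b = "ipQ Q x y" and ?c = "ipQ Q y y"
  have a: "?a > 0" using ipQ_pos[OF False] .
  define t where "t = - ?b / ?a"
  have "0 \<le> ipQ Q (t *\<^sub>R x + y) (t *\<^sub>R x + y)" by (rule ipQ_nonneg)
  also have "\<dots> = t\<^sup>2 * ?a + 2 * t * ?b + ?c"
    by (simp add: ipQ_add_left ipQ_add_right ipQ_scale_left ipQ_scale_right ipQ_sym[of y x]
        power2_eq_square algebra_simps)
  also have "\<dots> = ?c - ?b\<^sup>2 / ?a"
    using a by (simp add: t_def field_simps power2_eq_square)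
  finally have "?b\<^sup>2 \<le> ?a * ?c" using a by (simp add: field_simps)
  then have "\<bar>?b\<bar> \<le> sqrt (?a * ?c)" by (simp add: real_le_rsqrt)
  then show ?thesis by (simp add: qnorm_def real_sqrt_mult)
qed simp

lemma qnorm_triangle: "qnorm Q (x + y) \<le> qnorm Q x + qnorm Q y"
proof -
  have "(qnorm Q (x + y))\<^sup>2 = (qnorm Q x)\<^sup>2 + 2 * ipQ Q x y + (qnorm Q y)\<^sup>2"
    by (simp add: qnorm_power2 ipQ_add_left ipQ_add_right ipQ_sym[of y x])
  also have "\<dots> \<le> (qnorm Q x + qnorm Q y)\<^sup>2"
    using ipQ_Cauchy_Schwarz[of x y] by (simp add: power2_eq_square algebra_simps)
  finally show ?thesis
    using qnorm_nonneg by (meson add_nonneg_nonneg power2_le_imp_le)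
qed

lemma qnorm_triangle_diff: "qnorm Q (x - z) \<le> qnorm Q (x - y) + qnorm Q (y - z)"
  using qnorm_triangle[of "x - y" "y - z"] by simp

lemma qnorm_diff_le_qnorm_add: "qnorm Q x - qnorm Q y \<le> qnorm Q (x + y)"
  using qnorm_triangle[of "x + y" "- y"] qnorm_minus[of y] by simp

lemma norm_le_qnorm: "\<exists>c>0. \<forall>x. c * norm x \<le> qnorm Q x"
proof -
  obtain y where y: "y \<in> sphere 0 1"
    and min: "\<And>z. z \<in> sphere 0 1 \<Longrightarrow> qnorm Q y \<le> qnorm Q z"
    using continuous_attains_inf[OF compact_sphere _ continuous_on_qnorm, of 0 1 Q]
    by auto
  have "qnorm Q y * norm x \<le> qnorm Q x" for x
  proof (cases "x = 0")
    case False
    then have "qnorm Q y \<le> qnorm Q ((1 / norm x) *\<^sub>R x)" by (intro min) simp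
    also have "\<dots> = qnorm Q x / norm x" by (simp add: qnorm_scaleR)
    finally show ?thesis using False by (simp add: field_simps)
  qed simp
  moreover have "qnorm Q y > 0" using y by (intro qnorm_pos) auto
  ultimately show ?thesis by blast
qed

text \<open>Without this bound the supremum defining \<open>restr_norm\<close> would be an unspecified real.\<close>

lemma bdd_above_qnorm_ratio: "bdd_above ((\<lambda>v. qnorm Q (L *v v) / qnorm Q v) ` S)"
proof -
  obtain C where C: "C > 0" "\<And>x. qnorm Q x \<le> C * norm x" using qnorm_le_norm by blast
  obtain c where c: "c > 0" "\<And>x. c * norm x \<le> qnorm Q x" using norm_le_qnorm by blast
  obtain B where B: "B > 0" "\<And>x. norm (L *v x) \<le> B * norm x"
    using bounded_linear.pos_bounded[OF matrix_vector_mul_bounded_linear[of L]]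
    by (auto simp: mult.commute)
  have "qnorm Q (L *v v) / qnorm Q v \<le> C * B / c" for v
  proof (cases "v = 0")
    case False
    have "qnorm Q (L *v v) \<le> C * (B * norm v)"
      using C B by (meson mult_left_mono order_trans less_imp_le)
    also have "\<dots> = (C * B / c) * (c * norm v)" using c by simp
    also have "\<dots> \<le> (C * B / c) * qnorm Q v" using c C B by (intro mult_left_mono) auto
    finally show ?thesis using qnorm_pos[OF False] by (simp add: divide_le_eq)
  qed (use B C c in simp)
  then show ?thesis by (intro bdd_aboveI2)
qed

lemma restr_norm_bound:
  assumes "restr_norm Q L S \<le> g" and "v \<in> S"
  shows "qnorm Q (L *v v) \<le> g * qnorm Q v"
proof (cases "v = 0")
  case False
  have "qnorm Q (L *v v) / qnorm Q v \<le> restr_norm Q L S"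
    unfolding restr_norm_def using assms(2) False by (intro cSUP_upper bdd_above_qnorm_ratio) auto
  then have "qnorm Q (L *v v) / qnorm Q v \<le> g" using assms(1) by linarith
  then show ?thesis using qnorm_pos[OF False] by (simp add: divide_le_eq)
qed simp

lemma restr_conorm_bound:
  assumes "g \<le> restr_conorm Q L S" and "v \<in> S"
  shows "g * qnorm Q v \<le> qnorm Q (L *v v)"
proof (cases "v = 0")
  case False
  have "bdd_below ((\<lambda>v. qnorm Q (L *v v) / qnorm Q v) ` (S - {0}))"
    by (rule bdd_belowI2[of _ 0]) (simp add: qnorm_nonneg)
  then have "restr_conorm Q L S \<le> qnorm Q (L *v v) / qnorm Q v"
    unfolding restr_conorm_def using assms(2) False by (intro cINF_lower) auto
  then have "g \<le> qnorm Q (L *v v) / qnorm Q v" using assms(1) by linarith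
  then show ?thesis using qnorm_pos[OF False] by (simp add: le_divide_eq)
qed simp

end

section \<open>Projection along an orthogonal splitting\<close>

definition split_proj :: "(real^'n) set \<Rightarrow> (real^'n) set \<Rightarrow> real^'n \<Rightarrow> real^'n" where
  "split_proj U S y = (SOME u. u \<in> U \<and> y - u \<in> S)"

locale orthogonal_splitting = adapted_norm +
  fixes U S
  assumes subspace_U: "subspace U" and subspace_S: "subspace S"
    and U_Int_S: "U \<inter> S = {0}"
    and U_plus_S: "\<And>y. \<exists>u\<in>U. \<exists>s\<in>S. y = u + s"
    and orthogonal: "\<And>u s. u \<in> U \<Longrightarrow> s \<in> S \<Longrightarrow> ipQ Q u s = 0"
begin

lemma split_proj_mem: "split_proj U S y \<in> U" "y - split_proj U S y \<in> S"
proof -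
  obtain u s where "u \<in> U" "s \<in> S" "y = u + s" using U_plus_S by blast
  then have "\<exists>u. u \<in> U \<and> y - u \<in> S" by (intro exI[of _ u]) auto
  then have "split_proj U S y \<in> U \<and> y - split_proj U S y \<in> S"
    unfolding split_proj_def by (rule someI_ex)
  then show "split_proj U S y \<in> U" "y - split_proj U S y \<in> S" by auto
qed

lemma split_proj_unique:
  assumes "u \<in> U" "y - u \<in> S"
  shows "split_proj U S y = u"
proof -
  have "split_proj U S y - u \<in> U"
    using subspace_diff[OF subspace_U split_proj_mem(1) assms(1)] .
  moreover have "split_proj U S y - u \<in> S"
    using subspace_diff[OF subspace_S assms(2) split_proj_mem(2)[of y]] by simp
  ultimately have "split_proj U S y - u \<in> U \<inter> S" by blast
  then show ?thesis using U_Int_S by simp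
qed

lemma split_proj_add: "split_proj U S (x + y) = split_proj U S x + split_proj U S y"
proof (rule split_proj_unique)
  show "split_proj U S x + split_proj U S y \<in> U"
    using subspace_add[OF subspace_U split_proj_mem(1) split_proj_mem(1)] .
  have "(x - split_proj U S x) + (y - split_proj U S y) \<in> S"
    using subspace_add[OF subspace_S split_proj_mem(2) split_proj_mem(2)] .
  then show "x + y - (split_proj U S x + split_proj U S y) \<in> S"
    by (simp add: algebra_simps)
qed

lemma split_proj_commute:
  assumes "(\<lambda>v. A *v v) ` U = U" "(\<lambda>v. A *v v) ` S = S"
  shows "split_proj U S (A *v y) = A *v split_proj U S y"
proof (rule split_proj_unique)
  show "A *v split_proj U S y \<in> U" using split_proj_mem(1) assms(1) by blast
  have "A *v y - A *v split_proj U S y = A *v (y - split_proj U S y)"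
    by (simp add: matrix_vector_mult_diff_distrib)
  then show "A *v y - A *v split_proj U S y \<in> S" using split_proj_mem(2)[of y] assms(2) by force
qed

lemma qnorm_split_proj_le: "qnorm Q (split_proj U S y) \<le> qnorm Q y"
proof -
  let ?u = "split_proj U S y" and ?s = "y - split_proj U S y"
  have orth: "ipQ Q ?u ?s = 0" "ipQ Q ?s ?u = 0"
    using orthogonal[OF split_proj_mem] ipQ_sym by auto
  have "(qnorm Q y)\<^sup>2 = ipQ Q (?u + ?s) (?u + ?s)" by (simp add: qnorm_power2)
  also have "\<dots> = (qnorm Q ?u)\<^sup>2 + (qnorm Q ?s)\<^sup>2"
    by (simp only: ipQ_add_left ipQ_add_right orth qnorm_power2)
  finally have "(qnorm Q ?u)\<^sup>2 \<le> (qnorm Q y)\<^sup>2" by simp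
  then show ?thesis using qnorm_nonneg by (meson power2_le_imp_le)
qed

lemma mem_qnbhd_translate:
  assumes "qnorm Q (split_proj U S (y - x)) \<le> R"
  shows "y \<in> qnbhd Q R ((\<lambda>v. x + v) ` S)"
proof -
  let ?s = "(y - x) - split_proj U S (y - x)"
  have "x + ?s \<in> (\<lambda>v. x + v) ` S" using split_proj_mem(2) by blast
  moreover have "qnorm Q (y - (x + ?s)) \<le> R" using assms by simp
  ultimately show ?thesis unfolding qnbhd_def by blast
qed

end

section \<open>Bounded drift from a hyperbolic linear map\<close>

lemma start_le_of_expanding_slow_growth:
  fixes w :: "nat \<Rightarrow> real"
  assumes r: "1 < r" and g: "0 \<le> g" "g < r" and D: "0 \<le> D"
    and expanding: "\<And>k. r * w k - D \<le> w (Suc k)"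
    and slow: "\<And>k. w k \<le> g ^ k * L"
  shows "w 0 \<le> D / (r - 1)"
proof (rule ccontr)
  define K where "K = D / (r - 1)"
  assume "\<not> w 0 \<le> D / (r - 1)"
  then have d: "w 0 - K > 0" by (simp add: K_def)
  \<comment> \<open>\<open>K\<close> is the fixed point of \<open>w \<mapsto> r w - D\<close>, so the excess over \<open>K\<close> grows by the factor \<open>r\<close>.\<close>
  have excess: "r ^ k * (w 0 - K) \<le> w k - K" for k
  proof (induction k)
    case (Suc k)
    have "r * K - D = K" using r by (simp add: K_def field_simps)
    then have "r * (w k - K) \<le> w (Suc k) - K" using expanding[of k] by (simp add: algebra_simps)
    moreover have "r ^ Suc k * (w 0 - K) \<le> r * (w k - K)" using Suc r by simp
    ultimately show ?case by linarith
  qed simp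
  have "(\<lambda>k. (g / r) ^ k * L) \<longlonglongrightarrow> 0 * L"
    using g r by (intro tendsto_mult tendsto_const LIMSEQ_power_zero) auto
  from order_tendstoD(2)[OF this, of "w 0 - K"] d
  obtain k where k: "(g / r) ^ k * L < w 0 - K"
    by (auto simp: eventually_sequentially)
  have "K \<ge> 0" using D r by (simp add: K_def)
  then have "r ^ k * (w 0 - K) \<le> g ^ k * L" using excess[of k] slow[of k] by linarith
  then have "w 0 - K \<le> (g / r) ^ k * L"
    using r by (simp add: field_simps)
  with k show False by simp
qed

context orthogonal_splitting
begin

lemma qnorm_split_proj_expanding:
  assumes "(\<lambda>v. A *v v) ` U = U" "(\<lambda>v. A *v v) ` S = S" and "r \<le> restr_conorm Q A U"
  shows "r * qnorm Q (split_proj U S d) - qnorm Q e \<le> qnorm Q (split_proj U S (A *v d + e))"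
proof -
  have "r * qnorm Q (split_proj U S d) \<le> qnorm Q (A *v split_proj U S d)"
    by (rule restr_conorm_bound[OF assms(3) split_proj_mem(1)])
  moreover have "qnorm Q (split_proj U S e) \<le> qnorm Q e" by (rule qnorm_split_proj_le)
  moreover have "qnorm Q (A *v split_proj U S d) - qnorm Q (split_proj U S e)
      \<le> qnorm Q (split_proj U S (A *v d + e))"
    using qnorm_diff_le_qnorm_add[of "A *v split_proj U S d" "split_proj U S e"]
      split_proj_add split_proj_commute[OF assms(1,2)] by simp
  ultimately show ?thesis by linarith
qed

lemma qnorm_split_proj_contracting:
  assumes "(\<lambda>v. A *v v) ` U = U" "(\<lambda>v. A *v v) ` S = S" and "restr_norm Q A U \<le> l"
  shows "qnorm Q (split_proj U S (A *v d + e)) \<le> l * qnorm Q (split_proj U S d) + qnorm Q e"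
proof -
  have "split_proj U S (A *v d + e) = A *v split_proj U S d + split_proj U S e"
    using split_proj_add split_proj_commute[OF assms(1,2)] by simp
  then have "qnorm Q (split_proj U S (A *v d + e))
      \<le> qnorm Q (A *v split_proj U S d) + qnorm Q (split_proj U S e)"
    using qnorm_triangle by simp
  also have "\<dots> \<le> l * qnorm Q (split_proj U S d) + qnorm Q e"
    using restr_norm_bound[OF assms(3) split_proj_mem(1)[of d]] qnorm_split_proj_le[of e] by linarith
  finally show ?thesis .
qed

lemma expanding_component_bounded:
  assumes inv: "(\<lambda>v. A *v v) ` U = U" "(\<lambda>v. A *v v) ` S = S"
    and expands: "r \<le> restr_conorm Q A U" "1 < r"
    and drift: "\<And>p q. qnorm Q (T p - T q - A *v (p - q)) \<le> D"
    and slow: "\<And>k. qnorm Q ((T ^^ k) y - (T ^^ k) x) \<le> g ^ k * L" and g: "0 \<le> g" "g < r"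
  shows "qnorm Q (split_proj U S (y - x)) \<le> D / (r - 1)"
proof -
  define w where "w k = qnorm Q (split_proj U S ((T ^^ k) y - (T ^^ k) x))" for k
  have "w 0 \<le> D / (r - 1)"
  proof (rule start_le_of_expanding_slow_growth[OF expands(2) g])
    show "0 \<le> D" using drift[of x x] by simp
    show "r * w k - D \<le> w (Suc k)" for k
    proof -
      let ?d = "(T ^^ k) y - (T ^^ k) x"
      let ?e = "T ((T ^^ k) y) - T ((T ^^ k) x) - A *v ?d"
      have "(T ^^ Suc k) y - (T ^^ Suc k) x = A *v ?d + ?e" by simp
      then show ?thesis
        using qnorm_split_proj_expanding[OF inv expands(1), of ?d ?e]
          drift[of "(T ^^ k) y" "(T ^^ k) x"]
        unfolding w_def by simp
    qed
    show "w k \<le> g ^ k * L" for k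
      unfolding w_def using qnorm_split_proj_le slow order_trans by blast
  qed
  then show ?thesis by (simp add: w_def)
qed

lemma contracting_component_bounded:
  assumes inv: "(\<lambda>v. A *v v) ` U = U" "(\<lambda>v. A *v v) ` S = S"
    and contracts: "restr_norm Q A U \<le> l" "0 < l" "l < 1"
    and drift: "\<And>p q. qnorm Q (p - q - A *v (T p - T q)) \<le> D"
    and slow: "\<And>k. qnorm Q ((T ^^ k) y - (T ^^ k) x) \<le> g ^ k * L" and g: "0 \<le> g" "g * l < 1"
  shows "qnorm Q (split_proj U S (y - x)) \<le> D / (1 - l)"
proof -
  define w where "w k = qnorm Q (split_proj U S ((T ^^ k) y - (T ^^ k) x))" for k
  \<comment> \<open>contraction by \<open>l\<close> from step \<open>k + 1\<close> back to step \<open>k\<close> is expansion by \<open>1 / l\<close> forward\<close>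
  have "w 0 \<le> (D / l) / (1 / l - 1)"
  proof (rule start_le_of_expanding_slow_growth)
    show "1 < 1 / l" "0 \<le> g" "g < 1 / l" using contracts g by (auto simp: field_simps)
    show "0 \<le> D / l" using drift[of x x] contracts by simp
    show "1 / l * w k - D / l \<le> w (Suc k)" for k
    proof -
      let ?p = "(T ^^ k) y" and ?q = "(T ^^ k) x"
      let ?d = "T ?p - T ?q"
      have "w k = qnorm Q (split_proj U S (A *v ?d + (?p - ?q - A *v ?d)))"
        by (simp add: w_def)
      also have "\<dots> \<le> l * w (Suc k) + qnorm Q (?p - ?q - A *v ?d)"
        using qnorm_split_proj_contracting[OF inv contracts(1), of ?d "?p - ?q - A *v ?d"]
        by (simp add: w_def)
      finally have "w k \<le> l * w (Suc k) + D" using drift[of ?p ?q] by linarith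
      then show ?thesis using contracts by (simp add: field_simps)
    qed
    show "w k \<le> g ^ k * L" for k
      unfolding w_def using qnorm_split_proj_le slow order_trans by blast
  qed
  also have "(D / l) / (1 / l - 1) = D / (1 - l)" using contracts by (simp add: field_simps)
  finally show ?thesis by (simp add: w_def)
qed

end

section \<open>Leaves of a foliation tangent to a dominated subbundle\<close>

definition tangent_path ::
  "real^'n^'n \<Rightarrow> (real^'n \<Rightarrow> (real^'n) set) \<Rightarrow> real \<Rightarrow>
    (real \<Rightarrow> real^'n) \<Rightarrow> (real \<Rightarrow> real^'n) \<Rightarrow> bool"
  where "tangent_path Q Ef B c v \<longleftrightarrow>
    (\<forall>t\<in>{0..1}. (c has_derivative (\<lambda>s. s *\<^sub>R v t)) (at t within {0..1}) \<and>
       v t \<in> Ef (c t) \<and> qnorm Q (v t) \<le> B)"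

lemma plaque_tangent_path:
  assumes chart: "foliation_chart M N Ef \<phi>" and M: "subspace M"
    and dom: "(a, b) \<in> chart_dom M N" "(a', b) \<in> chart_dom M N"
  shows "\<exists>c v B. c 0 = \<phi> (a, b) \<and> c 1 = \<phi> (a', b) \<and> tangent_path Q Ef B c v"
proof -
  let ?P = "M \<inter> ball 0 1"
  have a: "a \<in> ?P" "a' \<in> ?P" and b: "b \<in> N \<inter> ball 0 1"
    using dom by (auto simp: chart_dom_def)
  obtain D where D_cont: "continuous_on ?P D"
    and D_deriv: "\<And>z. z \<in> ?P \<Longrightarrow>
      ((\<lambda>z'. \<phi> (z', b)) has_derivative (\<lambda>h. D z *v h)) (at z within ?P)"
    and D_tangent: "\<And>z. z \<in> ?P \<Longrightarrow> (\<lambda>h. D z *v h) ` M = Ef (\<phi> (z, b))"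
    using chart b unfolding foliation_chart_def by metis
  define p where "p t = a + t *\<^sub>R (a' - a)" for t :: real
  have p_in: "p t \<in> ?P" if "t \<in> {0..1}" for t
  proof -
    have "convex ?P" using M by (intro convex_Int convex_ball subspace_imp_convex)
    moreover have "p t = (1 - t) *\<^sub>R a + t *\<^sub>R a'" by (simp add: p_def algebra_simps)
    ultimately show ?thesis using that a unfolding convex_def by auto
  qed
  define c where "c = (\<lambda>t. \<phi> (p t, b))"
  define v where "v t = D (p t) *v (a' - a)" for t
  have "continuous_on {0..1} p" unfolding p_def by (intro continuous_intros)
  then have "continuous_on {0..1} (\<lambda>t. D (p t))"
    by (rule continuous_on_compose2[OF D_cont]) (use p_in in auto)
  moreover have "linear (\<lambda>X::real^'a^'a. X *v (a' - a))"
    by (simp add: linear_iff matrix_vector_mult_add_rdistrib scaleR_matrix_vector_assoc)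
  ultimately have "continuous_on {0..1} v"
    unfolding v_def by (rule linear_continuous_on_compose)
  then have "continuous_on {0..1} (\<lambda>t. qnorm Q (v t))"
    by (rule continuous_on_compose2[OF continuous_on_qnorm]) auto
  then obtain m where m: "\<And>t. t \<in> {0..1} \<Longrightarrow> qnorm Q (v t) \<le> qnorm Q (v m)"
    using continuous_attains_sup[OF compact_Icc] by (metis empty_iff)
  have "tangent_path Q Ef (qnorm Q (v m)) c v"
    unfolding tangent_path_def
  proof (intro ballI conjI m)
    fix t :: real assume t: "t \<in> {0..1}"
    have "((\<lambda>x. \<phi> (p x, b)) has_derivative (\<lambda>s. D (p t) *v (s *\<^sub>R (a' - a))))
        (at t within {0..1})"
      by (rule has_derivative_in_compose2[of ?P "\<lambda>z. \<phi> (z, b)" "\<lambda>z h. D z *v h"])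
        (use D_deriv p_in t in \<open>auto simp: p_def intro!: derivative_eq_intros\<close>)
    then show "(c has_derivative (\<lambda>s. s *\<^sub>R v t)) (at t within {0..1})"
      by (simp add: c_def v_def matrix_vector_mult_scaleR)
    have "a' - a \<in> M" using a subspace_diff[OF M] by blast
    then show "v t \<in> Ef (c t)" using D_tangent[OF p_in[OF t]] by (auto simp: c_def v_def)
  qed
  moreover have "c 0 = \<phi> (a, b)" "c 1 = \<phi> (a', b)" by (simp_all add: c_def p_def)
  ultimately show ?thesis by blast
qed

lemma tangent_path_image:
  assumes T_deriv: "\<And>x. (T has_derivative (\<lambda>h. DT x *v h)) (at x)"
    and T_tangent: "\<And>x v. v \<in> Ef x \<Longrightarrow> DT x *v v \<in> Ef (T x)"
    and T_bound: "\<And>x v. v \<in> Ef x \<Longrightarrow> qnorm Q (DT x *v v) \<le> g * qnorm Q v"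
    and g: "0 \<le> g"
    and path: "tangent_path Q Ef B c v"
  shows "tangent_path Q Ef (g * B) (T \<circ> c) (\<lambda>t. DT (c t) *v v t)"
  unfolding tangent_path_def
proof (intro ballI conjI)
  fix t :: real assume t: "t \<in> {0..1}"
  have c: "(c has_derivative (\<lambda>s. s *\<^sub>R v t)) (at t within {0..1})"
    "v t \<in> Ef (c t)" "qnorm Q (v t) \<le> B"
    using path t by (auto simp: tangent_path_def)
  show "(T \<circ> c has_derivative (\<lambda>s. s *\<^sub>R (DT (c t) *v v t))) (at t within {0..1})"
    using has_derivative_compose[OF c(1) T_deriv] by (simp add: o_def matrix_vector_mult_scaleR)
  show "DT (c t) *v v t \<in> Ef ((T \<circ> c) t)" using T_tangent[OF c(2)] by simp
  show "qnorm Q (DT (c t) *v v t) \<le> g * B"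
    using T_bound[OF c(2)] mult_left_mono[OF c(3) g] by linarith
qed

context adapted_norm
begin

lemma tangent_path_displacement:
  assumes "tangent_path Q Ef B c v"
  shows "qnorm Q (c 1 - c 0) \<le> B"
proof -
  define w where "w = c 1 - c 0"
  define f where "f t = c t \<bullet> (Q *v w)" for t
  have "\<And>t. t \<in> {0..1} \<Longrightarrow>
      (f has_derivative (\<lambda>s. (s *\<^sub>R v t) \<bullet> (Q *v w))) (at t within {0..1})"
    using assms unfolding f_def tangent_path_def by (intro has_derivative_inner_left) auto
  from mvt_very_simple[OF _ this] obtain t where t: "t \<in> {0..1}" "f 1 - f 0 = v t \<bullet> (Q *v w)"
    by force
  have v: "qnorm Q (v t) \<le> B" using assms t(1) by (simp add: tangent_path_def)
  have "(qnorm Q w)\<^sup>2 = ipQ Q (v t) w"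
    using t(2) by (simp add: qnorm_power2 ipQ_def f_def w_def inner_diff_left)
  also have "\<dots> \<le> B * qnorm Q w"
    using ipQ_Cauchy_Schwarz[of "v t" w] mult_right_mono[OF v qnorm_nonneg[of w]]
      abs_ge_self[of "ipQ Q (v t) w"] by linarith
  finally have "qnorm Q w * qnorm Q w \<le> B * qnorm Q w" by (simp add: power2_eq_square)
  moreover have "0 \<le> B" using v qnorm_nonneg order_trans by blast
  ultimately show ?thesis
    using qnorm_nonneg[of w] by (cases "qnorm Q w = 0") (auto simp: w_def)
qed

lemma plaque_iterates_separation:
  assumes T_deriv: "\<And>x. (T has_derivative (\<lambda>h. DT x *v h)) (at x)"
    and T_tangent: "\<And>x v. v \<in> Ef x \<Longrightarrow> DT x *v v \<in> Ef (T x)"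
    and T_bound: "\<And>x v. v \<in> Ef x \<Longrightarrow> qnorm Q (DT x *v v) \<le> g * qnorm Q v"
    and g: "0 \<le> g"
    and chart: "foliation_chart M N Ef \<phi>" and M: "subspace M"
    and z: "z \<in> plaque_through M N \<phi> u"
  shows "\<exists>B. \<forall>k. qnorm Q ((T ^^ k) z - (T ^^ k) u) \<le> g ^ k * B"
proof -
  obtain a a' b where ab: "(a, b) \<in> chart_dom M N" "(a', b) \<in> chart_dom M N"
    "\<phi> (a, b) = u" "\<phi> (a', b) = z"
    using z unfolding plaque_through_def by blast
  obtain c v B where c: "c 0 = u" "c 1 = z" and path: "tangent_path Q Ef B c v"
    using plaque_tangent_path[OF chart M ab(1,2)] ab(3,4) by blast
  have "\<exists>v'. tangent_path Q Ef (g ^ k * B) ((T ^^ k) \<circ> c) v'" for k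
  proof (induction k)
    case 0
    then show ?case using path by (auto simp: o_def)
  next
    case (Suc k)
    then obtain v' where "tangent_path Q Ef (g ^ k * B) ((T ^^ k) \<circ> c) v'" by blast
    moreover have "T \<circ> ((T ^^ k) \<circ> c) = (T ^^ Suc k) \<circ> c" "g * (g ^ k * B) = g ^ Suc k * B"
      by (simp_all add: o_assoc)
    ultimately show ?case using tangent_path_image[OF T_deriv T_tangent T_bound g] by metis
  qed
  then have "qnorm Q ((T ^^ k) z - (T ^^ k) u) \<le> g ^ k * B" for k
    using tangent_path_displacement c by fastforce
  then show ?thesis by blast
qed

lemma leaf_iterates_separation:
  assumes T_deriv: "\<And>x. (T has_derivative (\<lambda>h. DT x *v h)) (at x)"
    and T_tangent: "\<And>x v. v \<in> Ef x \<Longrightarrow> DT x *v v \<in> Ef (T x)"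
    and T_bound: "\<And>x v. v \<in> Ef x \<Longrightarrow> qnorm Q (DT x *v v) \<le> g * qnorm Q v"
    and g: "0 \<le> g"
    and fol: "tangent_foliation M N Ef W" and M: "subspace M"
    and y: "y \<in> W x"
  shows "\<exists>L. \<forall>k. qnorm Q ((T ^^ k) y - (T ^^ k) x) \<le> g ^ k * L"
proof -
  obtain \<A> where atlas: "foliation_atlas M N Ef \<A>" and W: "W x = leaf_of M N \<A> x"
    using fol unfolding tangent_foliation_def by blast
  have plaque: "\<exists>B. \<forall>k. qnorm Q ((T ^^ k) z - (T ^^ k) u) \<le> g ^ k * B"
    if "\<phi> \<in> \<A>" "z \<in> plaque_through M N \<phi> u \<or> u \<in> plaque_through M N \<phi> z" for \<phi> u z
  proof -
    have "foliation_chart M N Ef \<phi>" using atlas that(1) unfolding foliation_atlas_def by blast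
    note separation = plaque_iterates_separation[OF T_deriv T_tangent T_bound g this M]
    from that(2) show ?thesis
    proof
      assume "u \<in> plaque_through M N \<phi> z"
      then show ?thesis using separation[of u z] by (simp add: qnorm_minus_commute)
    qed (rule separation)
  qed
  have "(\<lambda>u v. \<exists>\<phi>\<in>\<A>. v \<in> plaque_through M N \<phi> u \<or> u \<in> plaque_through M N \<phi> v)\<^sup>*\<^sup>* x y"
    using y W unfolding leaf_of_def by simp
  then show ?thesis
  proof (induction rule: rtranclp_induct)
    case base
    then show ?case by (intro exI[of _ 0]) simp
  next
    case (step y z)
    obtain L where L: "\<And>k. qnorm Q ((T ^^ k) y - (T ^^ k) x) \<le> g ^ k * L"
      using step.IH by blast
    obtain B where B: "\<And>k. qnorm Q ((T ^^ k) z - (T ^^ k) y) \<le> g ^ k * B"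
      using step.hyps(2) plaque by blast
    have "qnorm Q ((T ^^ k) z - (T ^^ k) x) \<le> g ^ k * (B + L)" for k
      using qnorm_triangle_diff[of "(T ^^ k) z" "(T ^^ k) x" "(T ^^ k) y"] B[of k] L[of k]
      by (simp add: distrib_left)
    then show ?case by blast
  qed
qed

end

section \<open>Lifts of torus diffeomorphisms\<close>

lemma periodic_continuous_bounded:
  fixes \<phi> :: "real^'n \<Rightarrow> real^'n"
  assumes cont: "continuous_on UNIV \<phi>"
    and periodic: "\<And>x z. z \<in> int_lattice \<Longrightarrow> \<phi> (x + z) = \<phi> x"
  shows "\<exists>C. \<forall>x. qnorm Q (\<phi> x) \<le> C"
proof -
  let ?K = "cbox (0::real^'n) (\<chi> i. 1)"
  have "continuous_on ?K (\<lambda>x. qnorm Q (\<phi> x))"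
    by (rule continuous_on_compose2[OF continuous_on_qnorm continuous_on_subset[OF cont]]) auto
  moreover have "(0::real^'n) \<in> ?K" by (simp add: mem_box_cart)
  ultimately obtain m where m: "\<And>y. y \<in> ?K \<Longrightarrow> qnorm Q (\<phi> y) \<le> qnorm Q (\<phi> m)"
    using continuous_attains_sup[OF compact_cbox, of 0 "\<chi> i. 1" "\<lambda>x. qnorm Q (\<phi> x)"]
    by blast
  have "qnorm Q (\<phi> x) \<le> qnorm Q (\<phi> m)" for x
  proof -
    define z :: "real^'n" where "z = (\<chi> i. of_int \<lfloor>x $ i\<rfloor>)"
    have "z \<in> int_lattice" unfolding int_lattice_def z_def by simp
    then have "\<phi> (x - z) = \<phi> x" using periodic[of z "x - z"] by simp
    moreover have "x - z \<in> ?K" unfolding mem_box_cart z_def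
      by auto (smt (verit) real_of_int_floor_add_one_gt)
    ultimately show ?thesis using m[of "x - z"] by simp
  qed
  then show ?thesis by blast
qed

lemma (in adapted_norm) torus_diffeo_lift_drift_bounded:
  assumes "torus_diffeo_lift A F DF"
  shows "\<exists>C. \<forall>p q. qnorm Q (F p - F q - A *v (p - q)) \<le> C"
proof -
  define \<phi> where "\<phi> x = F x - A *v x" for x
  have deriv: "\<And>x. (F has_derivative (\<lambda>h. DF x *v h)) (at x)"
    and lattice: "\<And>x z. z \<in> int_lattice \<Longrightarrow> F (x + z) = F x + A *v z"
    using assms unfolding torus_diffeo_lift_def by auto
  have "continuous_on UNIV F"
    using deriv has_derivative_continuous continuous_at_imp_continuous_on by blast
  then have cont: "continuous_on UNIV \<phi>" unfolding \<phi>_def by (intro continuous_intros)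
  have periodic: "\<phi> (x + z) = \<phi> x" if "z \<in> int_lattice" for x z
    using lattice[OF that, of x] by (simp add: \<phi>_def matrix_vector_right_distrib)
  obtain C where C: "\<And>x. qnorm Q (\<phi> x) \<le> C"
    using periodic_continuous_bounded[where \<phi> = \<phi>, OF cont periodic] by blast
  have "qnorm Q (F p - F q - A *v (p - q)) \<le> 2 * C" for p q
  proof -
    have "F p - F q - A *v (p - q) = \<phi> p + - \<phi> q"
      by (simp add: \<phi>_def matrix_vector_mult_diff_distrib)
    then show ?thesis using qnorm_triangle[of "\<phi> p" "- \<phi> q"] qnorm_minus C[of p] C[of q] by simp
  qed
  then show ?thesis by blast
qed

lemma matrix_inv_inverse:
  fixes M :: "real^'n^'n"
  assumes "invertible M"
  shows "M ** matrix_inv M = mat 1" "matrix_inv M ** M = mat 1"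
proof -
  have "\<exists>M'. M ** M' = mat 1 \<and> M' ** M = mat 1" using assms unfolding invertible_def by blast
  then have "M ** matrix_inv M = mat 1 \<and> matrix_inv M ** M = mat 1"
    unfolding matrix_inv_def by (rule someI_ex)
  then show "M ** matrix_inv M = mat 1" "matrix_inv M ** M = mat 1" by auto
qed

lemma bij_has_derivative_inv:
  fixes F :: "real^'n \<Rightarrow> real^'n"
  assumes "bij F" and deriv: "\<And>x. (F has_derivative (\<lambda>h. DF x *v h)) (at x)"
    and "\<And>x. invertible (DF x)"
  shows "(inv F has_derivative (\<lambda>h. matrix_inv (DF (inv F y)) *v h)) (at y)"
proof -
  have "continuous_on UNIV F"
    using deriv has_derivative_continuous continuous_at_imp_continuous_on by blast
  moreover have "(\<lambda>h. DF (inv F y) *v h) \<circ> (\<lambda>h. matrix_inv (DF (inv F y)) *v h) = id"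
    using matrix_inv_inverse(1)[OF assms(3)] by (auto simp: fun_eq_iff matrix_vector_mul_assoc)
  moreover have "inv F (F x) = x" for x using bij_is_inj[OF assms(1)] by simp
  ultimately have "(inv F has_derivative (\<lambda>h. matrix_inv (DF (inv F y)) *v h)) (at (F (inv F y)))"
    by (intro has_derivative_inverse_strong[of UNIV _ F "inv F"]) (use deriv in auto)
  then show ?thesis using assms(1) by (simp add: bij_is_surj surj_f_inv_f)
qed

lemma (in adapted_norm) inverse_derivative_field_bound:
  assumes "bij F" and invertible: "\<And>x. invertible (DF x)"
    and image: "\<And>x. (\<lambda>v. DF x *v v) ` V x = V (F x)"
    and conorm: "\<And>x. c \<le> restr_conorm Q (DF x) (V x)" "0 < c"
    and w: "w \<in> V y"
  shows "matrix_inv (DF (inv F y)) *v w \<in> V (inv F y) \<and>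
    qnorm Q (matrix_inv (DF (inv F y)) *v w) \<le> (1 / c) * qnorm Q w"
proof -
  have "w \<in> (\<lambda>v. DF (inv F y) *v v) ` V (inv F y)"
    using image[of "inv F y"] w assms(1) by (simp add: bij_is_surj surj_f_inv_f)
  then obtain u where u: "u \<in> V (inv F y)" "w = DF (inv F y) *v u" by blast
  then have "matrix_inv (DF (inv F y)) *v w = u"
    by (simp add: matrix_vector_mul_assoc matrix_inv_inverse(2)[OF invertible])
  moreover have "c * qnorm Q u \<le> qnorm Q w" using restr_conorm_bound[OF conorm(1) u(1)] u(2) by simp
  then have "qnorm Q u \<le> (1 / c) * qnorm Q w" using conorm(2) by (simp add: field_simps)
  ultimately show ?thesis using u(1) by simp
qed

locale lift_homotopic_to_hyperbolic = adapted_norm +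
  fixes A :: "real^'n^'n" and Es Eu :: "(real^'n) set" and lam gam :: real
    and F :: "real^'n \<Rightarrow> real^'n" and DF :: "real^'n \<Rightarrow> real^'n^'n"
  assumes subspace_Es: "subspace Es" and subspace_Eu: "subspace Eu"
    and Es_invariant: "(\<lambda>v. A *v v) ` Es = Es" and Eu_invariant: "(\<lambda>v. A *v v) ` Eu = Eu"
    and Es_Int_Eu: "Es \<inter> Eu = {0}" and Es_plus_Eu: "{a + b |a b. a \<in> Es \<and> b \<in> Eu} = UNIV"
    and Es_orthogonal_Eu: "\<forall>u\<in>Es. \<forall>v\<in>Eu. ipQ Q u v = 0"
    and contracts: "restr_norm Q A Es \<le> lam" and expands: "gam \<le> restr_conorm Q A Eu"
    and rates: "0 < lam" "lam < 1" "1 < gam"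
    and lift: "torus_diffeo_lift A F DF"
begin

lemma Es_Eu_decompose: "\<exists>a\<in>Es. \<exists>b\<in>Eu. y = a + b"
proof -
  have "y \<in> {a + b |a b. a \<in> Es \<and> b \<in> Eu}" using Es_plus_Eu by simp
  then show ?thesis by blast
qed

sublocale stable: orthogonal_splitting Q Es Eu
  by unfold_locales (use subspace_Es subspace_Eu Es_Int_Eu Es_Eu_decompose Es_orthogonal_Eu in auto)

sublocale unstable: orthogonal_splitting Q Eu Es
proof unfold_locales
  show "\<exists>u\<in>Eu. \<exists>s\<in>Es. y = u + s" for y using Es_Eu_decompose[of y] by (metis add.commute)
  show "ipQ Q u s = 0" if "u \<in> Eu" "s \<in> Es" for u s
    using Es_orthogonal_Eu that ipQ_sym[of u s] by simp
qed (use subspace_Es subspace_Eu Es_Int_Eu in auto)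

lemma bij_F: "bij F" and F_deriv: "(F has_derivative (\<lambda>h. DF x *v h)) (at x)"
  and invertible_DF: "invertible (DF x)"
  using lift unfolding torus_diffeo_lift_def by auto

lemma leaf_unstable_component_bounded:
  assumes tangent: "\<And>x v. v \<in> Ef x \<Longrightarrow> DF x *v v \<in> Ef (F x)"
    and bound: "\<And>x. restr_norm Q (DF x) (Ef x) \<le> g" "g < gam"
    and fol: "tangent_foliation M N Ef W" "subspace M"
  shows "\<exists>K. \<forall>x. \<forall>y\<in>W x. qnorm Q (split_proj Eu Es (y - x)) \<le> K"
proof -
  obtain C where drift: "\<And>p q. qnorm Q (F p - F q - A *v (p - q)) \<le> C"
    using torus_diffeo_lift_drift_bounded[OF lift] by blast
  have bound': "qnorm Q (DF x *v v) \<le> max g 0 * qnorm Q v" if "v \<in> Ef x" for x v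
    using restr_norm_bound[OF order_trans[OF bound(1) max.cobounded1] that] .
  have "qnorm Q (split_proj Eu Es (y - x)) \<le> C / (gam - 1)" if y: "y \<in> W x" for x y
  proof -
    obtain L where "\<And>k. qnorm Q ((F ^^ k) y - (F ^^ k) x) \<le> max g 0 ^ k * L"
      using leaf_iterates_separation[OF F_deriv tangent bound' max.cobounded2 fol y] by blast
    then show ?thesis
      by (rule unstable.expanding_component_bounded[OF Eu_invariant Es_invariant expands rates(3)
            drift])
        (use bound(2) rates(3) in auto)
  qed
  then show ?thesis by blast
qed

lemma leaf_stable_component_bounded:
  assumes image: "\<And>x. (\<lambda>v. DF x *v v) ` Ef x = Ef (F x)"
    and bound: "\<And>x. c \<le> restr_conorm Q (DF x) (Ef x)" "lam < c"
    and fol: "tangent_foliation M N Ef W" "subspace M"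
  shows "\<exists>K. \<forall>x. \<forall>y\<in>W x. qnorm Q (split_proj Es Eu (y - x)) \<le> K"
proof -
  obtain C where "\<And>p q. qnorm Q (F p - F q - A *v (p - q)) \<le> C"
    using torus_diffeo_lift_drift_bounded[OF lift] by blast
  then have drift: "qnorm Q (p - q - A *v (inv F p - inv F q)) \<le> C" for p q
    using bij_F by (metis bij_is_surj surj_f_inv_f)
  have c: "0 < c" using bound(2) rates(1) by simp
  note inv_DF = inverse_derivative_field_bound[where F = F and DF = DF and V = Ef,
      OF bij_F invertible_DF image bound(1) c]
  have "qnorm Q (split_proj Es Eu (y - x)) \<le> C / (1 - lam)" if y: "y \<in> W x" for x y
  proof -
    obtain L where slow: "\<And>k. qnorm Q ((inv F ^^ k) y - (inv F ^^ k) x) \<le> (1 / c) ^ k * L"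
      using leaf_iterates_separation[OF bij_has_derivative_inv[OF bij_F F_deriv invertible_DF]
          conjunct1[OF inv_DF] conjunct2[OF inv_DF] _ fol y] c by auto
    show ?thesis
      by (rule stable.contracting_component_bounded[OF Es_invariant Eu_invariant contracts rates(1,2)
            drift slow])
        (use c bound(2) in \<open>auto simp: field_simps\<close>)
  qed
  then show ?thesis by blast
qed

end

theorem mainTheorem7:
  fixes A Q :: "real^'n^'n"
    and Es Eu :: "(real^'n) set"
    and lam gam lamh gamh :: real
    and F :: "real^'n \<Rightarrow> real^'n"
    and DF :: "real^'n \<Rightarrow> real^'n^'n"
    and E G :: "real^'n \<Rightarrow> (real^'n) set"
    and WE WG :: "real^'n \<Rightarrow> (real^'n) set"
  assumes aut: "torus_automorphism A"
    and adapted: "inner_product_matrix Q"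
    and Es_sub: "subspace Es" and Eu_sub: "subspace Eu"
    and Es_inv: "(\<lambda>v. A *v v) ` Es = Es" and Eu_inv: "(\<lambda>v. A *v v) ` Eu = Eu"
    and split_A: "Es \<inter> Eu = {0}" "{a + b |a b. a \<in> Es \<and> b \<in> Eu} = UNIV"
    and orth: "\<forall>u\<in>Es. \<forall>v\<in>Eu. ipQ Q u v = 0"
    and contr: "restr_norm Q A Es \<le> lam"
    and expd: "restr_conorm Q A Eu \<ge> gam"
    and rates: "0 < lam" "lam < 1" "1 < gam"
    and diffeo: "torus_diffeo_lift A F DF"
    and dom: "dominated_splitting Q F DF E G"
    and per: "periodic_field E" "periodic_field G"
    and dims: "\<forall>x. dim (E x) = dim Es" "\<forall>x. dim (G x) = dim Eu"
    and bdE: "\<forall>x. restr_norm Q (DF x) (E x) \<le> gamh" "gamh < gam"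
    and bdG: "\<forall>x. restr_conorm Q (DF x) (G x) \<ge> lamh" "lamh > lam"
    and folE: "tangent_foliation Es Eu E WE" "periodic_foliation WE"
    and folG: "tangent_foliation Eu Es G WG" "periodic_foliation WG"
  shows "\<exists>R>0. \<forall>x. WE x \<subseteq> qnbhd Q R ((\<lambda>v. x + v) ` Es) \<and>
                  WG x \<subseteq> qnbhd Q R ((\<lambda>v. x + v) ` Eu)"
proof -
  interpret lift_homotopic_to_hyperbolic Q A Es Eu lam gam F DF
    using adapted Es_sub Eu_sub Es_inv Eu_inv split_A orth contr expd rates diffeo
    by unfold_locales
  have "(\<lambda>v. DF x *v v) ` E x = E (F x)" "(\<lambda>v. DF x *v v) ` G x = G (F x)" for x
    using dom unfolding dominated_splitting_def by auto
  then obtain KE KG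
    where KE: "\<And>x y. y \<in> WE x \<Longrightarrow> qnorm Q (split_proj Eu Es (y - x)) \<le> KE"
      and KG: "\<And>x y. y \<in> WG x \<Longrightarrow> qnorm Q (split_proj Es Eu (y - x)) \<le> KG"
    using leaf_unstable_component_bounded[OF _ bdE(1)[rule_format] bdE(2) folE(1) Es_sub]
      leaf_stable_component_bounded[OF _ bdG(1)[rule_format] bdG(2) folG(1) Eu_sub]
    by blast
  define R where "R = max 1 (max KE KG)"
  have "WE x \<subseteq> qnbhd Q R ((\<lambda>v. x + v) ` Es)" "WG x \<subseteq> qnbhd Q R ((\<lambda>v. x + v) ` Eu)" for x
    using unstable.mem_qnbhd_translate[OF order_trans[OF KE]]
      stable.mem_qnbhd_translate[OF order_trans[OF KG]] by (auto simp: R_def)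
  moreover have "R > 0" by (simp add: R_def)
  ultimately show ?thesis by blast
qed

end
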